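(* Let $\varphi:U\times U\to V$ be a fully-regular alternating bilinear map and $\mathcal{S}_\varphi:=\{\varphi(x,-)\mid x\in U\}\subseteq\mathcal{L}(U,V)$. If $\#\mathbb{K}>\mathrm{urk}(\mathcal{S}_\varphi)$, then $\mathcal{S}_\varphi$ is semi-primitive.
   Context: $U,V$ finite-dimensional over a field $\mathbb{K}$. $\varphi$ is fully-regular if $V$ is spanned by its values and $\varphi(x,-)\ne0$ for all nonzero $x$. $\mathrm{urk}$ is the maximal rank of an operator in the space. For an operator space $\mathcal{T}\subseteq\mathcal{L}(U,V)$: reduced means $\bigcap_f\ker f=\{0\}$ and $\sum_f\mathrm{im} f=V$; $c$-defective means $\dim\ker f\geq c$ for all $f\in\mathcal{T}$; the defectiveness index is the greatest such $c$; $\mathcal{T}$ is semi-primitive if it is reduced and there is no linear hyperplane $U'$ of $U$ such that $\{f_{|U'}\mid f\in\mathcal{T}\}$ is $c$-defective, $c$ being the defectiveness index of $\mathcal{T}$. *)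

theory Defs
  imports "HOL-Analysis.Analysis"
begin

text \<open>Finite-dimensional vector spaces over a field 'k are modelled as types 'u, 'v
  with scalar multiplications sU, sV (locale vector_space of HOL); the whole
  type is the space.\<close>

definition fin_dim_vs :: "('k::field \<Rightarrow> 'u::ab_group_add \<Rightarrow> 'u) \<Rightarrow> bool" where
  "fin_dim_vs s \<longleftrightarrow> (\<exists>B. finite_dimensional_vector_space s B)"

definition bilinear_map ::
  "('k::field \<Rightarrow> 'u::ab_group_add \<Rightarrow> 'u) \<Rightarrow> ('k \<Rightarrow> 'v::ab_group_add \<Rightarrow> 'v)
   \<Rightarrow> ('u \<Rightarrow> 'u \<Rightarrow> 'v) \<Rightarrow> bool" where
  "bilinear_map sU sV \<phi> \<longleftrightarrow>
     (\<forall>x. Vector_Spaces.linear sU sV (\<phi> x)) \<and> (\<forall>y. Vector_Spaces.linear sU sV (\<lambda>x. \<phi> x y))"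

definition alternating_map :: "('u \<Rightarrow> 'u \<Rightarrow> 'v::zero) \<Rightarrow> bool" where
  "alternating_map \<phi> \<longleftrightarrow> (\<forall>x. \<phi> x x = 0)"

definition fully_regular ::
  "('k::field \<Rightarrow> 'v::ab_group_add \<Rightarrow> 'v) \<Rightarrow> ('u::zero \<Rightarrow> 'u \<Rightarrow> 'v) \<Rightarrow> bool" where
  "fully_regular sV \<phi> \<longleftrightarrow>
     module.span sV {\<phi> x y | x y. True} = UNIV \<and> (\<forall>x. x \<noteq> 0 \<longrightarrow> \<phi> x \<noteq> (\<lambda>_. 0))"

definition op_space_of :: "('u \<Rightarrow> 'u \<Rightarrow> 'v) \<Rightarrow> ('u \<Rightarrow> 'v) set" where
  "op_space_of \<phi> = {\<phi> x | x. True}"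

definition op_rank ::
  "('k::field \<Rightarrow> 'v::ab_group_add \<Rightarrow> 'v) \<Rightarrow> ('u \<Rightarrow> 'v) \<Rightarrow> nat" where
  "op_rank sV f = vector_space.dim sV (range f)"

definition urk ::
  "('k::field \<Rightarrow> 'v::ab_group_add \<Rightarrow> 'v) \<Rightarrow> ('u \<Rightarrow> 'v) set \<Rightarrow> nat" where
  "urk sV T = Max (op_rank sV ` T)"

definition reduced ::
  "('k::field \<Rightarrow> 'v::ab_group_add \<Rightarrow> 'v) \<Rightarrow> ('u::zero \<Rightarrow> 'v) set \<Rightarrow> bool" where
  "reduced sV T \<longleftrightarrow>
     (\<Inter>f\<in>T. {x. f x = 0}) = {0} \<and> module.span sV (\<Union>f\<in>T. range f) = UNIV"

definition c_defective ::
  "('k::field \<Rightarrow> 'u::ab_group_add \<Rightarrow> 'u) \<Rightarrow> ('u \<Rightarrow> 'v::zero) set \<Rightarrow> nat \<Rightarrow> bool" where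
  "c_defective sU T c \<longleftrightarrow> (\<forall>f\<in>T. c \<le> vector_space.dim sU {x. f x = 0})"

text \<open>{f restricted to U' | f in T} is c-defective: the kernel of the restriction
  f|U' : U' \<rightarrow> V is ker f \<inter> U'.\<close>
definition restr_c_defective ::
  "('k::field \<Rightarrow> 'u::ab_group_add \<Rightarrow> 'u) \<Rightarrow> 'u set \<Rightarrow> ('u \<Rightarrow> 'v::zero) set \<Rightarrow> nat \<Rightarrow> bool" where
  "restr_c_defective sU U' T c \<longleftrightarrow> (\<forall>f\<in>T. c \<le> vector_space.dim sU {x \<in> U'. f x = 0})"

definition defectiveness_index ::
  "('k::field \<Rightarrow> 'u::ab_group_add \<Rightarrow> 'u) \<Rightarrow> ('u \<Rightarrow> 'v::zero) set \<Rightarrow> nat" where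
  "defectiveness_index sU T = (GREATEST c. c_defective sU T c)"

definition linear_hyperplane :: "('k::field \<Rightarrow> 'u::ab_group_add \<Rightarrow> 'u) \<Rightarrow> 'u set \<Rightarrow> bool" where
  "linear_hyperplane sU H \<longleftrightarrow>
     module.subspace sU H \<and> vector_space.dim sU H + 1 = vector_space.dim sU (UNIV :: 'u set)"

definition semi_primitive ::
  "('k::field \<Rightarrow> 'u::ab_group_add \<Rightarrow> 'u) \<Rightarrow> ('k \<Rightarrow> 'v::ab_group_add \<Rightarrow> 'v)
   \<Rightarrow> ('u \<Rightarrow> 'v) set \<Rightarrow> bool" where
  "semi_primitive sU sV T \<longleftrightarrow>
     reduced sV T \<and>
     \<not> (\<exists>H. linear_hyperplane sU H \<and> restr_c_defective sU H T (defectiveness_index sU T))"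

end

theory Submission
  imports Defs
begin

text \<open>Let x0 minimise dim ker phi(x0,-); this minimum is the defectiveness index.
  Since phi is alternating, x lies in ker phi(x,-), so if the restrictions to a hyperplane H
  were still defective, every minimiser would lie in H. For y outside H all the operators
  phi(a x0 + y, -) = a phi(x0,-) + phi(y,-) then have kernels strictly larger than
  ker phi(x0,-). In a pencil a f + g each such jump of the kernel produces an eigenvector,
  for the eigenvalue -a, of the compression of g to the range of f; eigenvectors for
  distinct eigenvalues are independent, so there are at most rk f such scalars a, which
  is impossible when the field has more than urk elements.\<close>

context vector_space
begin

lemma independent_eigenvectors:
  assumes lin: "Vector_Spaces.linear scale scale T" and fin: "finite S"
    and eig: "\<forall>w\<in>S. w \<noteq> 0 \<and> T w = scale (e w) w" and inj: "inj_on e S"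
  shows "independent S"
  using fin eig inj
proof (induction S rule: finite_induct)
  case empty
  then show ?case by (simp add: independent_empty)
next
  case (insert x S)
  interpret T: Vector_Spaces.linear scale scale T by (rule lin)
  have indS: "independent S" using insert by (auto simp: inj_on_insert)
  have "x \<notin> span S"
  proof
    assume "x \<in> span S"
    then obtain c where xc: "x = (\<Sum>w\<in>S. scale (c w) w)"
      using span_finite[OF insert.hyps(1)] by auto
    have Tx_eig: "T x = (\<Sum>w\<in>S. scale (c w * e w) w)"
      unfolding xc T.sum T.scale using insert.prems(1) by (intro sum.cong) auto
    have Tx_scale: "T x = (\<Sum>w\<in>S. scale (e x * c w) w)"
      using insert.prems(1) xc by (simp add: scale_sum_right)
    define d where "d w = c w * e w - e x * c w" for w
    have "(\<Sum>w\<in>S. scale (d w) w) = 0"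
      using Tx_eig Tx_scale by (simp add: d_def scale_left_diff_distrib sum_subtractf)
    then have "\<forall>w\<in>S. d w = 0"
      using indS unfolding dependent_finite[OF insert.hyps(1)] by blast
    moreover have "\<forall>w\<in>S. e w \<noteq> e x"
      using insert.prems(2) insert.hyps(2) by (auto simp: inj_on_def)
    ultimately have "\<forall>w\<in>S. c w = 0"
      unfolding d_def by (metis mult.commute right_diff_distrib' mult_eq_0_iff eq_iff_diff_eq_0)
    then have "x = 0" using xc by simp
    then show False using insert.prems(1) by simp
  qed
  then show ?case using indS by (simp add: independent_insertI)
qed

end

lemma (in finite_dimensional_vector_space) subspace_subset_if_dim_le_inter:
  assumes "subspace H" "subspace K" "dim K \<le> dim (H \<inter> K)"
  shows "K \<subseteq> H"
proof -
  have "H \<inter> K = K"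
    using assms by (intro subspace_dim_equal subspace_inter) auto
  then show ?thesis by blast
qed

lemma pencil_kernel_jump_eigenvector:
  fixes f g :: "'u::ab_group_add \<Rightarrow> 'v::ab_group_add" and h :: "'v \<Rightarrow> 'u" and P :: "'v \<Rightarrow> 'v"
    and sU :: "'k::field \<Rightarrow> 'u \<Rightarrow> 'u" and sV :: "'k \<Rightarrow> 'v \<Rightarrow> 'v"
  assumes fU: "finite_dimensional_vector_space sU BU"
    and lf: "Vector_Spaces.linear sU sV f" and lg: "Vector_Spaces.linear sU sV g"
    and lh: "Vector_Spaces.linear sV sU h" and lP: "Vector_Spaces.linear sV sV P"
    and fh: "\<And>v. v \<in> range f \<Longrightarrow> f (h v) = v"
    and P_id: "\<And>v. v \<in> range f \<Longrightarrow> P v = v"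
    and jump: "vector_space.dim sU {x. f x = 0} < vector_space.dim sU {x. sV a (f x) + g x = 0}"
  shows "\<exists>v\<in>range f. v \<noteq> 0 \<and> P (g (h v)) = sV (- a) v"
proof (rule ccontr)
  assume no_eig: "\<not> ?thesis"
  interpret U: finite_dimensional_vector_space sU BU by fact
  interpret f: Vector_Spaces.linear sU sV f by fact
  interpret UV: finite_dimensional_vector_space_pair_1 sU BU sV by unfold_locales
  interpret UU: finite_dimensional_vector_space_pair_1 sU BU sU by unfold_locales
  interpret h: Vector_Spaces.linear sV sU h by fact
  interpret P: Vector_Spaces.linear sV sV P by fact
  define K where "K = {x. sV a (f x) + g x = 0}"
  \<comment> \<open>q maps K into ker f; an element of its kernel would give the eigenvector f x\<close>
  define q where "q = (\<lambda>u. u - h (f u))"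
  have lq: "Vector_Spaces.linear sU sU q"
    using UU.linear_compose_sub[OF U.linear_ident Vector_Spaces.linear_compose[OF lf lh]]
    by (simp add: q_def o_def)
  have K_subspace: "U.subspace K"
    unfolding K_def
    by (intro UV.linear_subspace_kernel UV.linear_compose_add UV.linear_compose_scale_right lf lg)
  have q_inj: "inj_on q K"
    unfolding UU.linear_inj_on_iff_eq_0[OF lq K_subspace]
  proof (intro ballI impI)
    fix x assume xK: "x \<in> K" and qx: "q x = 0"
    then have x_eq: "x = h (f x)" unfolding q_def by simp
    have "P (sV a (f x) + g x) = 0" using xK unfolding K_def by simp
    then have "sV a (P (f x)) + P (g (h (f x))) = 0"
      using x_eq P.add P.scale by metis
    then have "P (g (h (f x))) = sV (- a) (f x)"
      using P_id[of "f x"] by (simp add: eq_neg_iff_add_eq_0 add.commute)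
    then have "f x = 0" using no_eig by blast
    then show "x = 0" using x_eq h.zero by simp
  qed
  have "q ` K \<subseteq> {x. f x = 0}"
    using fh by (auto simp: q_def f.diff)
  then have "U.dim (q ` K) \<le> U.dim {x. f x = 0}" by (rule U.dim_subset)
  moreover have "U.dim (q ` K) = U.dim K"
    by (rule UU.dim_image_eq[OF lq]) (simp add: U.span_eq_iff[THEN iffD2, OF K_subspace] q_inj)
  ultimately show False using jump unfolding K_def by simp
qed

lemma card_le_rank_of_pencil_kernel_jumps:
  fixes f g :: "'u::ab_group_add \<Rightarrow> 'v::ab_group_add"
    and sU :: "'k::field \<Rightarrow> 'u \<Rightarrow> 'u" and sV :: "'k \<Rightarrow> 'v \<Rightarrow> 'v"
  assumes fU: "finite_dimensional_vector_space sU BU"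
    and fV: "finite_dimensional_vector_space sV BV"
    and lf: "Vector_Spaces.linear sU sV f" and lg: "Vector_Spaces.linear sU sV g"
    and "finite A"
    and jumps: "\<And>a. a \<in> A \<Longrightarrow>
      vector_space.dim sU {x. f x = 0} < vector_space.dim sU {x. sV a (f x) + g x = 0}"
  shows "card A \<le> vector_space.dim sV (range f)"
proof -
  interpret U: finite_dimensional_vector_space sU BU by fact
  interpret V: finite_dimensional_vector_space sV BV by fact
  interpret UV: finite_dimensional_vector_space_pair_1 sU BU sV by unfold_locales
  interpret VV: finite_dimensional_vector_space_pair_1 sV BV sV by unfold_locales
  have R_subspace: "V.subspace (range f)"
    by (rule UV.linear_subspace_image[OF lf U.subspace_UNIV])
  obtain h where lh: "Vector_Spaces.linear sV sU h" and fh: "\<forall>v\<in>range f. f (h v) = v"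
    using UV.linear_exists_right_inverse_on[OF lf U.subspace_UNIV] by auto
  obtain P where lP: "Vector_Spaces.linear sV sV P" and P_id: "\<forall>v\<in>range f. P v = v"
    using VV.linear_exists_left_inverse_on[OF V.linear_ident R_subspace] by auto
  define T where "T = (\<lambda>v. P (g (h v)))"
  have lT: "Vector_Spaces.linear sV sV T"
    using Vector_Spaces.linear_compose[OF Vector_Spaces.linear_compose[OF lh lg] lP]
    by (simp add: T_def o_def)
  have "\<forall>a\<in>A. \<exists>w\<in>range f. w \<noteq> 0 \<and> T w = sV (- a) w"
    using pencil_kernel_jump_eigenvector[OF fU lf lg lh lP] fh P_id jumps
    unfolding T_def by blast
  then obtain v where v: "\<And>a. a \<in> A \<Longrightarrow> v a \<in> range f \<and> v a \<noteq> 0 \<and> T (v a) = sV (- a) (v a)"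
    by metis
  have v_inj: "inj_on v A"
  proof (rule inj_onI)
    fix a b assume "a \<in> A" "b \<in> A" "v a = v b"
    then have "sV (- a) (v a) = sV (- b) (v a)" "v a \<noteq> 0" using v by metis+
    then show "a = b" by simp
  qed
  define e where "e w = - inv_into A v w" for w
  have e_v: "e (v a) = - a" if "a \<in> A" for a
    using v_inj that by (simp add: e_def)
  have "V.independent (v ` A)"
  proof (rule V.independent_eigenvectors[OF lT])
    show "finite (v ` A)" using \<open>finite A\<close> by simp
    show "\<forall>w\<in>v ` A. w \<noteq> 0 \<and> T w = sV (e w) w" using v e_v by auto
    show "inj_on e (v ` A)" by (rule inj_onI) (auto simp: e_v)
  qed
  moreover have "v ` A \<subseteq> range f" using v by auto
  ultimately have "card (v ` A) \<le> V.dim (range f)"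
    by (rule V.independent_card_le_dim[rotated])
  then show ?thesis using card_image[OF v_inj] by simp
qed

lemma ex_finite_subset_card:
  assumes "infinite (UNIV :: 'a set) \<or> n \<le> card (UNIV :: 'a set)"
  obtains A :: "'a set" where "finite A" "card A = n"
  using assms obtain_subset_with_card_n infinite_arbitrarily_large by metis

lemma op_rank_le_urk:
  assumes "finite_dimensional_vector_space sV BV" "f \<in> T"
  shows "op_rank sV f \<le> urk sV T"
proof -
  interpret V: finite_dimensional_vector_space sV BV by fact
  have "op_rank sV ` T \<subseteq> {..V.dimension}"
    unfolding op_rank_def using V.dim_subset_UNIV by auto
  then have "finite (op_rank sV ` T)" by (rule finite_subset) simp
  then show ?thesis unfolding urk_def using assms(2) by simp
qed

lemma defectiveness_index_eq_least_kernel_dim: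
  assumes "f0 \<in> T" "\<And>f. f \<in> T \<Longrightarrow> vector_space.dim sU {x. f0 x = 0} \<le> vector_space.dim sU {x. f x = 0}"
  shows "defectiveness_index sU T = vector_space.dim sU {x. f0 x = 0}"
  unfolding defectiveness_index_def
  by (rule Greatest_equality) (use assms in \<open>auto simp: c_defective_def\<close>)

lemma alternating_map_swap:
  assumes "bilinear_map sU sV \<phi>" "alternating_map \<phi>"
  shows "\<phi> y x = - \<phi> x y"
proof -
  have add_left: "\<phi> (x + y) z = \<phi> x z + \<phi> y z"
    and add_right: "\<phi> z (x + y) = \<phi> z x + \<phi> z y" for x y z
    using assms(1) by (auto simp: bilinear_map_def Vector_Spaces.linear_iff_module_hom
        intro: module_hom.add[where f = "\<lambda>x. \<phi> x z"] module_hom.add[where f = "\<phi> z"])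
  have alt: "\<phi> x x = 0" for x using assms(2) by (simp add: alternating_map_def)
  have "\<phi> (x + y) (x + y) = \<phi> x x + \<phi> x y + (\<phi> y x + \<phi> y y)"
    by (simp only: add_left add_right add_ac)
  then have "\<phi> x y + \<phi> y x = 0" by (simp add: alt)
  then show ?thesis by (simp add: eq_neg_iff_add_eq_0 add.commute)
qed

lemma reduced_op_space_of:
  assumes bil: "bilinear_map sU sV \<phi>" and alt: "alternating_map \<phi>"
    and reg: "fully_regular sV \<phi>"
  shows "reduced sV (op_space_of \<phi>)"
proof -
  have "\<phi> x 0 = 0" for x
    using bil module_hom.zero[of sU sV "\<phi> x"]
    by (simp add: bilinear_map_def Vector_Spaces.linear_iff_module_hom)
  moreover have "y = 0" if "\<forall>x. \<phi> x y = 0" for y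
  proof -
    have "\<phi> y = (\<lambda>_. 0)"
      using that alternating_map_swap[OF bil alt, of y] by fastforce
    then show ?thesis using reg unfolding fully_regular_def by blast
  qed
  ultimately have "(\<Inter>f\<in>op_space_of \<phi>. {x. f x = 0}) = {0}"
    unfolding op_space_of_def by blast
  moreover have "(\<Union>f\<in>op_space_of \<phi>. range f) = {\<phi> x y | x y. True}"
    unfolding op_space_of_def by blast
  ultimately show ?thesis
    using reg unfolding reduced_def fully_regular_def by simp
qed

lemma not_restr_c_defective_if_large_field:
  fixes sU :: "'k::field \<Rightarrow> 'u::ab_group_add \<Rightarrow> 'u" and sV :: "'k \<Rightarrow> 'v::ab_group_add \<Rightarrow> 'v"
    and \<phi> :: "'u \<Rightarrow> 'u \<Rightarrow> 'v"
  assumes fU: "finite_dimensional_vector_space sU BU"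
    and fV: "finite_dimensional_vector_space sV BV"
    and bil: "bilinear_map sU sV \<phi>" and alt: "alternating_map \<phi>"
    and x0_min: "\<And>x. vector_space.dim sU {z. \<phi> x0 z = 0} \<le> vector_space.dim sU {z. \<phi> x z = 0}"
    and large: "infinite (UNIV :: 'k set) \<or> urk sV (op_space_of \<phi>) < card (UNIV :: 'k set)"
    and H: "linear_hyperplane sU H"
  shows "\<not> restr_c_defective sU H (op_space_of \<phi>) (vector_space.dim sU {z. \<phi> x0 z = 0})"
proof
  interpret U: finite_dimensional_vector_space sU BU by fact
  interpret V: finite_dimensional_vector_space sV BV by fact
  interpret UV: finite_dimensional_vector_space_pair_1 sU BU sV by unfold_locales
  define k where "k x = U.dim {z. \<phi> x z = 0}" for x
  assume "restr_c_defective sU H (op_space_of \<phi>) (k x0)"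
  then have defective: "k x0 \<le> U.dim (H \<inter> {z. \<phi> x z = 0})" for x
    unfolding restr_c_defective_def op_space_of_def by (auto simp: Int_def)
  have lin_right: "Vector_Spaces.linear sU sV (\<phi> x)"
    and lin_left: "Vector_Spaces.linear sU sV (\<lambda>x. \<phi> x z)" for x z
    using bil unfolding bilinear_map_def by auto
  have H_subspace: "U.subspace H" and "H \<noteq> UNIV"
    using H unfolding linear_hyperplane_def by auto
  have in_H: "x \<in> H" if "k x = k x0" for x
  proof -
    have "{z. \<phi> x z = 0} \<subseteq> H"
      using U.subspace_subset_if_dim_le_inter[OF H_subspace
          UV.linear_subspace_kernel[OF lin_right]] defective[of x] that
      by (simp add: k_def)
    then show ?thesis using alt unfolding alternating_map_def by blast
  qed
  obtain y where "y \<notin> H" using \<open>H \<noteq> UNIV\<close> by blast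
  have jump: "k x0 < U.dim {z. sV a (\<phi> x0 z) + \<phi> y z = 0}" for a
  proof -
    have "sU a x0 \<in> H" using in_H[of x0] U.subspace_scale[OF H_subspace] by simp
    then have "sU a x0 + y \<notin> H"
      using \<open>y \<notin> H\<close> U.subspace_diff[OF H_subspace, of "sU a x0 + y" "sU a x0"] by auto
    then have "k x0 < k (sU a x0 + y)"
      using in_H[of "sU a x0 + y"] x0_min[of "sU a x0 + y"] unfolding k_def by linarith
    moreover have "\<phi> (sU a x0 + y) z = sV a (\<phi> x0 z) + \<phi> y z" for z
      using UV.linear_add[OF lin_left] UV.linear_scale[OF lin_left] by simp
    ultimately show ?thesis unfolding k_def by simp
  qed
  obtain A :: "'k set" where "finite A" and card_A: "card A = Suc (urk sV (op_space_of \<phi>))"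
    using ex_finite_subset_card large by (metis Suc_leI)
  have "card A \<le> V.dim (range (\<phi> x0))"
    using card_le_rank_of_pencil_kernel_jumps[OF fU fV lin_right lin_right \<open>finite A\<close>] jump
    unfolding k_def by blast
  moreover have "V.dim (range (\<phi> x0)) \<le> urk sV (op_space_of \<phi>)"
    using op_rank_le_urk[OF fV, of "\<phi> x0" "op_space_of \<phi>"]
    unfolding op_rank_def op_space_of_def by auto
  ultimately show False using card_A by simp
qed

theorem mainTheorem17:
  fixes sU :: "'k::field \<Rightarrow> 'u::ab_group_add \<Rightarrow> 'u"
    and sV :: "'k \<Rightarrow> 'v::ab_group_add \<Rightarrow> 'v"
    and \<phi> :: "'u \<Rightarrow> 'u \<Rightarrow> 'v"
  assumes "vector_space sU" and "vector_space sV"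
    and "fin_dim_vs sU" and "fin_dim_vs sV"
    and "bilinear_map sU sV \<phi>"
    and "alternating_map \<phi>"
    and "fully_regular sV \<phi>"
    and "infinite (UNIV :: 'k set) \<or> urk sV (op_space_of \<phi>) < card (UNIV :: 'k set)"
  shows "semi_primitive sU sV (op_space_of \<phi>)"
proof -
  obtain BU BV where fU: "finite_dimensional_vector_space sU BU"
    and fV: "finite_dimensional_vector_space sV BV"
    using assms(3,4) unfolding fin_dim_vs_def by blast
  define k where "k x = vector_space.dim sU {z. \<phi> x z = 0}" for x
  obtain x0 where x0_min: "\<And>x. k x0 \<le> k x"
    using ex_has_least_nat[of "\<lambda>_. True" undefined k] by blast
  have "defectiveness_index sU (op_space_of \<phi>) = k x0"
    unfolding k_def
    by (rule defectiveness_index_eq_least_kernel_dim)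
      (auto simp: op_space_of_def x0_min[unfolded k_def])
  moreover have "\<not> restr_c_defective sU H (op_space_of \<phi>) (k x0)"
    if "linear_hyperplane sU H" for H
    using not_restr_c_defective_if_large_field[OF fU fV assms(5,6) x0_min[unfolded k_def]
        assms(8) that]
    unfolding k_def .
  ultimately have "\<not> (\<exists>H. linear_hyperplane sU H \<and>
      restr_c_defective sU H (op_space_of \<phi>) (defectiveness_index sU (op_space_of \<phi>)))"
    by simp
  then show ?thesis
    using reduced_op_space_of[OF assms(5-7)] unfolding semi_primitive_def by blast
qed

end
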